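(* Let $n \ge 2$, $L\ge 1$, let $\Lambda^l\subseteq[n]$ for $l\in[L]$, put $\Lambda:=\bigcup_{l\in[L]}\Lambda^l$, and let $\mathcal{A}_k^l$ be the Snuffy sparsity patterns $$\mathcal{A}_k^l = \{k\} \cup \begin{cases} [n] & \text{if } k \in \Lambda^l,\\ \Lambda^l & \text{otherwise.}\end{cases}$$ Suppose $|\Lambda| \ge \frac{n-1}{2}$. Then: (1) $k\in\mathcal{A}_k^l$ for all $k\in[n]$, $l\in[L]$; (2) there is a permutation $\gamma$ of $[n]$ such that for all $i\in[n-1]$, $\gamma(i)\in\bigcup_{l=1}^{L}\mathcal{A}^l_{\gamma(i+1)}$; (3) the directed graph on $[n]$ with an arc $k\to j$ whenever $j\in\mathcal{A}_k^l$ for some $l\in[L]$ is strongly connected (every patch attends to every other patch, directly or indirectly), and in fact any two vertices are joined by a directed path of length at most $2$.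
   Context: $[a]=\{1,\dots,a\}$. The set $\mathcal{A}_k^l$ is the set of patches that patch $k$ attends to in layer $l$ of a sparse transformer. Conditions (1)–(3) are the sufficient conditions (from prior work) for a sparse transformer with a softmax-type probability map to be a universal approximator of sequence-to-sequence functions. *)

theory Defs
  imports Complex_Main
begin

definition snuffy :: "nat \<Rightarrow> (nat \<Rightarrow> nat set) \<Rightarrow> nat \<Rightarrow> nat \<Rightarrow> nat set" where
  "snuffy n Lam k l = {k} \<union> (if k \<in> Lam l then {1..n} else Lam l)"

definition snuffy_arc :: "nat \<Rightarrow> nat \<Rightarrow> (nat \<Rightarrow> nat set) \<Rightarrow> nat \<Rightarrow> nat \<Rightarrow> bool" where
  "snuffy_arc n L Lam k j \<longleftrightarrow> k \<in> {1..n} \<and> j \<in> {1..n} \<and> (\<exists>l\<in>{1..L}. j \<in> snuffy n Lam k l)"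

end

theory Submission
  imports Defs
begin

text \<open>Every patch lying in some \<open>\<Lambda>\<^sup>l\<close> is a hub: it attends to all patches and all patches
  attend to it. Strong connectivity with paths of length \<open>\<le> 2\<close> is then immediate, routing
  through one hub. For the ordering \<open>\<gamma>\<close> it suffices that of any two consecutive patches one
  is a hub; this is achieved by interleaving the non-hubs with the hubs, which is possible
  because there are at most \<open>n - |\<Lambda>| \<le> |\<Lambda>| + 1\<close> non-hubs.\<close>

fun interleave :: "'a list \<Rightarrow> 'a list \<Rightarrow> 'a list" where
  "interleave (b # bs) (a # as) = b # a # interleave bs as"
| "interleave bs as = bs @ as"

lemma set_interleave: "set (interleave bs as) = set bs \<union> set as"
  by (induction bs as rule: interleave.induct) auto

lemma distinct_interleave:
  "distinct bs \<Longrightarrow> distinct as \<Longrightarrow> set bs \<inter> set as = {} \<Longrightarrow> distinct (interleave bs as)"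
  by (induction bs as rule: interleave.induct) (auto simp: set_interleave)

lemma successively_interleave:
  assumes "set as \<subseteq> H" and "length bs \<le> length as + 1"
  shows "successively (\<lambda>x y. x \<in> H \<or> y \<in> H) (interleave bs as)"
  using assms
proof (induction bs as rule: interleave.induct)
  case (1 b bs a as)
  then show ?case by (cases "interleave bs as") auto
next
  case ("2_1" as)
  then show ?case by (induction as rule: induct_list012) auto
next
  case ("2_2" bs)
  then show ?case by (cases bs) auto
qed

lemma successively_nth:
  "successively P xs \<Longrightarrow> Suc i < length xs \<Longrightarrow> P (xs ! i) (xs ! Suc i)"
proof (induction P xs arbitrary: i rule: successively.induct)
  case (3 P x y xs)
  then show ?case by (cases i) auto
qed auto

lemma bij_betw_nth_shifted:
  assumes "distinct xs"
  shows "bij_betw (\<lambda>i. xs ! (i - 1)) {1..length xs} (set xs)"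
proof -
  have "bij_betw (\<lambda>i. i - 1) {1..length xs} {..<length xs}"
    by (rule bij_betw_byWitness[where f' = Suc]) auto
  then show ?thesis
    using bij_betw_nth[OF assms refl refl] by (auto dest: bij_betw_trans simp: comp_def)
qed

lemma exists_list_adjacent_hit:
  assumes "finite S" and "card (S - H) \<le> card (S \<inter> H) + 1"
  obtains xs where "distinct xs" "set xs = S" "successively (\<lambda>x y. x \<in> H \<or> y \<in> H) xs"
proof -
  obtain bs where bs: "set bs = S - H" "distinct bs"
    using finite_distinct_list[of "S - H"] assms(1) by blast
  obtain as where as: "set as = S \<inter> H" "distinct as"
    using finite_distinct_list[of "S \<inter> H"] assms(1) by blast
  have "length bs \<le> length as + 1"
    using assms(2) bs as by (simp add: distinct_card[symmetric])
  show ?thesis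
  proof (rule that)
    show "distinct (interleave bs as)"
      using bs as by (auto intro: distinct_interleave)
    show "set (interleave bs as) = S"
      using bs as by (auto simp: set_interleave)
    show "successively (\<lambda>x y. x \<in> H \<or> y \<in> H) (interleave bs as)"
      using as \<open>length bs \<le> length as + 1\<close> by (auto intro: successively_interleave)
  qed
qed

lemma exists_permutation_adjacent_hit:
  fixes n :: nat
  assumes "card ({1..n} - H) \<le> card ({1..n} \<inter> H) + 1"
  obtains \<gamma> where "bij_betw \<gamma> {1..n} {1..n}"
    and "\<forall>i\<in>{1..n-1}. \<gamma> i \<in> H \<or> \<gamma> (i + 1) \<in> H"
proof -
  obtain xs where xs: "distinct xs" "set xs = {1..n}"
    and hit: "successively (\<lambda>x y. x \<in> H \<or> y \<in> H) xs"
    using exists_list_adjacent_hit[OF _ assms] by blast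
  have len: "length xs = n"
    using distinct_card[OF xs(1)] xs(2) by simp
  show ?thesis
  proof
    show "bij_betw (\<lambda>i. xs ! (i - 1)) {1..n} {1..n}"
      using bij_betw_nth_shifted[OF xs(1)] xs(2) len by simp
    show "\<forall>i\<in>{1..n-1}. xs ! (i - 1) \<in> H \<or> xs ! (i + 1 - 1) \<in> H"
    proof
      fix i assume "i \<in> {1..n-1}"
      then have "Suc (i - 1) < length xs" "Suc (i - 1) = i + 1 - 1" using len by auto
      then show "xs ! (i - 1) \<in> H \<or> xs ! (i + 1 - 1) \<in> H"
        using successively_nth[OF hit] by metis
    qed
  qed
qed

lemma self_mem_snuffy: "k \<in> snuffy n Lam k l"
  by (simp add: snuffy_def)

lemma mem_snuffy_of_hub: "k \<in> Lam l \<Longrightarrow> j \<in> {1..n} \<Longrightarrow> j \<in> snuffy n Lam k l"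
  by (simp add: snuffy_def)

lemma hub_mem_snuffy: "j \<in> Lam l \<Longrightarrow> j \<in> {1..n} \<Longrightarrow> j \<in> snuffy n Lam k l"
  by (simp add: snuffy_def)

lemma snuffy_arc_via_hub:
  assumes "l \<in> {1..L}" and "Lam l \<subseteq> {1..n}" and "h \<in> Lam l"
    and "k \<in> {1..n}" and "j \<in> {1..n}"
  shows "snuffy_arc n L Lam k j \<or>
    (\<exists>m\<in>{1..n}. snuffy_arc n L Lam k m \<and> snuffy_arc n L Lam m j)"
proof (cases "k \<in> Lam l")
  case True
  then show ?thesis
    using assms unfolding snuffy_arc_def by (blast intro: mem_snuffy_of_hub)
next
  case False
  have "snuffy_arc n L Lam k h" "snuffy_arc n L Lam h j" "h \<in> {1..n}"
    using assms unfolding snuffy_arc_def by (blast intro: hub_mem_snuffy mem_snuffy_of_hub)+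
  then show ?thesis by blast
qed

theorem mainTheorem2:
  fixes n L :: nat and Lam :: "nat \<Rightarrow> nat set"
  assumes "n \<ge> 2" and "L \<ge> 1"
    and "\<And>l. l \<in> {1..L} \<Longrightarrow> Lam l \<subseteq> {1..n}"
    and "real (card (\<Union>l\<in>{1..L}. Lam l)) \<ge> (real n - 1) / 2"
  shows "(\<forall>k\<in>{1..n}. \<forall>l\<in>{1..L}. k \<in> snuffy n Lam k l)
     \<and> (\<exists>\<gamma>. bij_betw \<gamma> {1..n} {1..n} \<and>
          (\<forall>i\<in>{1..n-1}. \<gamma> i \<in> (\<Union>l\<in>{1..L}. snuffy n Lam (\<gamma> (i+1)) l)))
     \<and> (\<forall>k\<in>{1..n}. \<forall>j\<in>{1..n}. (k, j) \<in> {(a, b). snuffy_arc n L Lam a b}\<^sup>*)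
     \<and> (\<forall>k\<in>{1..n}. \<forall>j\<in>{1..n}. snuffy_arc n L Lam k j \<or>
          (\<exists>m\<in>{1..n}. snuffy_arc n L Lam k m \<and> snuffy_arc n L Lam m j))"
proof -
  define U where "U = (\<Union>l\<in>{1..L}. Lam l)"
  have U_sub: "U \<subseteq> {1..n}" using assms(3) unfolding U_def by blast
  then have "finite U" by (rule finite_subset) simp
  have "real n \<le> 2 * real (card U) + 1" using assms(4) unfolding U_def[symmetric] by (simp add: field_simps)
  then have card_U: "n \<le> 2 * card U + 1" by linarith
  then have "U \<noteq> {}" using assms(1) by auto
  then obtain m l where hub: "l \<in> {1..L}" "m \<in> Lam l"
    unfolding U_def by blast
  have two_steps: "\<forall>k\<in>{1..n}. \<forall>j\<in>{1..n}. snuffy_arc n L Lam k j \<or>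
      (\<exists>m\<in>{1..n}. snuffy_arc n L Lam k m \<and> snuffy_arc n L Lam m j)"
    using snuffy_arc_via_hub[where Lam = Lam, OF hub(1) assms(3)[OF hub(1)] hub(2)] by blast
  then have connected: "\<forall>k\<in>{1..n}. \<forall>j\<in>{1..n}. (k, j) \<in> {(a, b). snuffy_arc n L Lam a b}\<^sup>*"
    by (blast intro: rtrancl_into_rtrancl)
  have "card ({1..n} - U) \<le> card ({1..n} \<inter> U) + 1"
    using card_U U_sub \<open>finite U\<close> by (simp add: card_Diff_subset Int_absorb1)
  then obtain \<gamma> where \<gamma>: "bij_betw \<gamma> {1..n} {1..n}"
    and hit: "\<forall>i\<in>{1..n-1}. \<gamma> i \<in> U \<or> \<gamma> (i + 1) \<in> U"
    by (rule exists_permutation_adjacent_hit)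
  have "\<forall>i\<in>{1..n-1}. \<gamma> i \<in> (\<Union>l\<in>{1..L}. snuffy n Lam (\<gamma> (i+1)) l)"
  proof
    fix i assume i: "i \<in> {1..n-1}"
    then have "\<gamma> i \<in> {1..n}" using bij_betwE[OF \<gamma>] by auto
    then show "\<gamma> i \<in> (\<Union>l\<in>{1..L}. snuffy n Lam (\<gamma> (i+1)) l)"
      using hit i U_sub unfolding U_def by (blast intro: hub_mem_snuffy mem_snuffy_of_hub)
  qed
  then show ?thesis using \<gamma> connected two_steps by (blast intro: self_mem_snuffy)
qed

end
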